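(* Let $\Omega \subset \mathbb{R}\mathrm{P}^{d-1}$ be a properly convex domain, and let $\Lambda \subseteq \partial\Omega$ be a boundary-convex subset containing all of its faces. Let $\mathcal{H}$ be a collection of subgroups of $\mathrm{Aut}(\Omega)$, each acting convex cocompactly on $\Omega$, whose full orbital limit sets $\Lambda_\Omega(H_i)$, $H_i \in \mathcal{H}$, are pairwise disjoint. Suppose every point of \[ \Lambda_c = \Lambda - \bigcup_{H_i \in \mathcal{H}} \Lambda_\Omega(H_i) \] is an extreme point of $\partial\Omega$. Then for any $x, y \in \Lambda$ such that $x \neq y$ and $x, y$ do not both lie in a common $\Lambda_\Omega(H_i)$, the open projective segment $(x,y)$ (the one contained in $\overline{\Omega}$) lies in $\Omega$.
   Context: A properly convex domain is an open subset $\Omega$ of real projective space whose closure is contained in some affine chart and is convex there; $\mathrm{Aut}(\Omega)$ is the subgroup of $\mathrm{PGL}(d,\mathbb{R})$ preserving $\Omega$. For $H \subseteq \mathrm{Aut}(\Omega)$, $\Lambda_\Omega(H)$ (the full orbital limit set) is the set of all accumulation points in $\partial\Omega$ of orbits $H\cdot x$, $x\in\Omega$; $H$ acts convex cocompactly on $\Omega$ if $H$ is discrete, the convex hull $\mathrm{Cor}_\Omega(H)$ of $\Lambda_\Omega(H)$ in $\Omega$ is nonempty, and $H$ acts cocompactly on it. A subset $\Lambda \subseteq \partial\Omega$ is boundary-convex if whenever $x,y \in \Lambda$ and the segment $(x,y)$ lies in $\partial\Omega$, then $(x,y) \subseteq \Lambda$. For $x \in \partial\Omega$, the face $F_\Omega(x)$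 consists of $x$ together with all $y\in\partial\Omega$ such that $x,y$ both lie in the interior of some open projective segment contained in $\partial\Omega$; $\Lambda$ contains all of its faces if $x\in\Lambda$ implies $F_\Omega(x)\subseteq\Lambda$. A point of $\partial\Omega$ is extreme if it lies in the interior of no nontrivial projective segment contained in $\partial\Omega$. *)

theory Defs
  imports "HOL-Analysis.Analysis"
begin

(* A properly convex domain in RP^{d-1} is given together with an
   affine chart whose closure-containing property holds: the chart is the complement of
   the projective hyperplane P(ker f), identified with the affine hyperplane
   {v. f \<bullet> v = 1} in R^d (each point of the chart is represented by its unique
   representative there).  PGL(d,R) = SL^{\<plusminus>}(d,R)/{\<plusminus>1}; a subgroup of PGL(d,R) is
   represented by its full preimage in SL^{\<plusminus>}(d,R) (matrices with |det| = 1). *)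

definition affine_chart :: "real^'n \<Rightarrow> (real^'n) set" where
  "affine_chart f = {v. f \<bullet> v = 1}"

(* Omega (given inside the chart of f) is a properly convex domain: nonempty, open in
   projective space (i.e. open in the chart), convex in the chart, and its closure in
   projective space lies in the chart (i.e. Omega is bounded in the chart). *)
definition properly_convex_domain :: "real^'n \<Rightarrow> (real^'n) set \<Rightarrow> bool" where
  "properly_convex_domain f \<Omega> \<longleftrightarrow> f \<noteq> 0 \<and> \<Omega> \<noteq> {} \<and> \<Omega> \<subseteq> affine_chart f \<and>
     openin (top_of_set (affine_chart f)) \<Omega> \<and> convex \<Omega> \<and> bounded \<Omega>"

(* boundary of Omega in projective space (closure lies in the chart) *)
definition pboundary :: "(real^'n) set \<Rightarrow> (real^'n) set" where
  "pboundary \<Omega> = closure \<Omega> - \<Omega>"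

definition proj_act :: "real^'n \<Rightarrow> real^'n^'n \<Rightarrow> real^'n \<Rightarrow> real^'n" where
  "proj_act f g v = (1 / (f \<bullet> (g *v v))) *\<^sub>R (g *v v)"

definition Aut :: "real^'n \<Rightarrow> (real^'n) set \<Rightarrow> (real^'n^'n) set" where
  "Aut f \<Omega> = {g. \<bar>det g\<bar> = 1 \<and> (\<forall>v\<in>\<Omega>. f \<bullet> (g *v v) \<noteq> 0) \<and> proj_act f g ` \<Omega> = \<Omega>}"

definition aut_subgroup :: "real^'n \<Rightarrow> (real^'n) set \<Rightarrow> (real^'n^'n) set \<Rightarrow> bool" where
  "aut_subgroup f \<Omega> H \<longleftrightarrow> H \<subseteq> Aut f \<Omega> \<and> mat 1 \<in> H \<and> - mat 1 \<in> H \<and>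
     (\<forall>g\<in>H. \<forall>h\<in>H. g ** h \<in> H) \<and> (\<forall>g\<in>H. matrix_inv g \<in> H)"

definition orbit :: "real^'n \<Rightarrow> (real^'n^'n) set \<Rightarrow> real^'n \<Rightarrow> (real^'n) set" where
  "orbit f H x = (\<lambda>g. proj_act f g x) ` H"

definition orbital_limit_set :: "real^'n \<Rightarrow> (real^'n) set \<Rightarrow> (real^'n^'n) set \<Rightarrow> (real^'n) set" where
  "orbital_limit_set f \<Omega> H = {p \<in> pboundary \<Omega>. \<exists>x\<in>\<Omega>. p islimpt orbit f H x}"

definition Cor :: "real^'n \<Rightarrow> (real^'n) set \<Rightarrow> (real^'n^'n) set \<Rightarrow> (real^'n) set" where
  "Cor f \<Omega> H = \<Omega> \<inter> convex hull (orbital_limit_set f \<Omega> H)"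

definition convex_cocompact :: "real^'n \<Rightarrow> (real^'n) set \<Rightarrow> (real^'n^'n) set \<Rightarrow> bool" where
  "convex_cocompact f \<Omega> H \<longleftrightarrow> discrete H \<and> Cor f \<Omega> H \<noteq> {} \<and>
     (\<exists>K. compact K \<and> K \<subseteq> Cor f \<Omega> H \<and> Cor f \<Omega> H \<subseteq> (\<Union>g\<in>H. proj_act f g ` K))"

definition boundary_convex :: "(real^'n) set \<Rightarrow> (real^'n) set \<Rightarrow> bool" where
  "boundary_convex \<Omega> \<Lambda> \<longleftrightarrow> (\<forall>x\<in>\<Lambda>. \<forall>y\<in>\<Lambda>. open_segment x y \<subseteq> pboundary \<Omega> \<longrightarrow> open_segment x y \<subseteq> \<Lambda>)"

definition face :: "(real^'n) set \<Rightarrow> real^'n \<Rightarrow> (real^'n) set" where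
  "face \<Omega> x = insert x {y \<in> pboundary \<Omega>. \<exists>a b. a \<noteq> b \<and> open_segment a b \<subseteq> pboundary \<Omega> \<and>
       x \<in> open_segment a b \<and> y \<in> open_segment a b}"

definition contains_faces :: "(real^'n) set \<Rightarrow> (real^'n) set \<Rightarrow> bool" where
  "contains_faces \<Omega> \<Lambda> \<longleftrightarrow> (\<forall>x\<in>\<Lambda>. face \<Omega> x \<subseteq> \<Lambda>)"

definition extreme_bdry :: "(real^'n) set \<Rightarrow> real^'n \<Rightarrow> bool" where
  "extreme_bdry \<Omega> p \<longleftrightarrow> p \<in> pboundary \<Omega> \<and>
     \<not> (\<exists>a b. a \<noteq> b \<and> open_segment a b \<subseteq> pboundary \<Omega> \<and> p \<in> open_segment a b)"

end

theory Submission
  imports Defs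
begin

text \<open>If the open segment \<open>(x, y)\<close> is not contained in \<open>\<Omega>\<close>, it lies in \<open>\<partial>\<Omega>\<close>, so its midpoint
  \<open>w\<close> lies in \<open>\<Lambda>\<close> but is not extreme; hence \<open>w \<in> \<Lambda>\<^sub>\<Omega>(H)\<close> for some \<open>H\<close>. For convex cocompact \<open>H\<close>
  limit points spread along boundary segments: points of \<open>Cor\<^sub>\<Omega>(H)\<close> approaching \<open>w\<close> are translates
  \<open>g\<^sub>n k\<^sub>n\<close> of a compact set \<open>K \<subseteq> \<Omega>\<close>, and pulling back along \<open>g\<^sub>n\<close> points of \<open>\<Omega>\<close> approaching a
  point \<open>q\<close> of \<open>(x, w)\<close> gives points on segments \<open>[e\<^sub>n, k\<^sub>n]\<close> whose affine parameter is bounded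
  below, since \<open>g\<^sub>n\<close> distorts ratios along them in a controlled way. These points subconverge
  inside \<open>\<Omega>\<close>, and a limit of rescaled \<open>g\<^sub>n\<close>, which is defined on all of \<open>\<Omega>\<close>, shows that \<open>q\<close> is
  an orbital limit point. Letting \<open>q \<rightarrow> x\<close> gives \<open>x \<in> closure Cor\<^sub>\<Omega>(H) \<inter> \<partial>\<Omega> \<subseteq> \<Lambda>\<^sub>\<Omega>(H)\<close>, and
  likewise for \<open>y\<close>, contradicting the hypothesis on \<open>x\<close> and \<open>y\<close>.\<close>

lemma tendsto_matrix_vector_mult:
  fixes A :: "nat \<Rightarrow> real^'n^'m" and x :: "nat \<Rightarrow> real^'n"
  assumes "A \<longlonglongrightarrow> a" "x \<longlonglongrightarrow> b"
  shows "(\<lambda>n. A n *v x n) \<longlonglongrightarrow> a *v b"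
  unfolding matrix_vector_mult_def
  by (intro tendsto_vec_lambda tendsto_sum tendsto_mult tendsto_vec_nth assms)

lemma proj_act_scaleR: "c \<noteq> 0 \<Longrightarrow> proj_act f (c *\<^sub>R M) v = proj_act f M v"
  by (simp add: proj_act_def scaleR_matrix_vector_assoc[symmetric])

lemma matrix_vector_mult_eq_scaleR_proj_act:
  "f \<bullet> (M *v v) \<noteq> 0 \<Longrightarrow> M *v v = (f \<bullet> (M *v v)) *\<^sub>R proj_act f M v"
  by (simp add: proj_act_def)

lemma tendsto_proj_act:
  assumes "M \<longlonglongrightarrow> A" "z \<longlonglongrightarrow> z0" "f \<bullet> (A *v z0) \<noteq> 0"
  shows "(\<lambda>n. proj_act f (M n) (z n)) \<longlonglongrightarrow> proj_act f A z0"
  unfolding proj_act_def using assms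
  by (intro tendsto_intros tendsto_matrix_vector_mult) auto

lemma nonzero_matrix_nonvanishing_on_hyperplane:
  fixes A :: "real^'n^'m"
  assumes "A \<noteq> 0" "A *v u = 0" "f \<bullet> u = 1"
  obtains v where "f \<bullet> v = 0" "A *v v \<noteq> 0"
proof -
  have "\<exists>v. f \<bullet> v = 0 \<and> A *v v \<noteq> 0"
  proof (rule ccontr)
    assume "\<not> ?thesis"
    then have ker: "A *v v = 0" if "f \<bullet> v = 0" for v
      using that by blast
    have "A *v z = 0 *v z" for z
    proof -
      have "A *v (z - (f \<bullet> z) *\<^sub>R u) = 0"
        using assms(3) by (intro ker) (simp add: inner_diff_right)
      then show ?thesis
        using assms(2) by (simp add: matrix_vector_mult_diff_distrib matrix_vector_mult_scaleR)
    qed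
    then show False using assms(1) by (simp add: matrix_eq)
  qed
  then show thesis using that by blast
qed

context
  fixes f :: "real^'n" and \<Omega> :: "(real^'n) set"
  assumes pcd: "properly_convex_domain f \<Omega>"
begin

lemma domain_convex: "convex \<Omega>"
  using pcd by (simp add: properly_convex_domain_def)

lemma closure_domain_subset_chart: "closure \<Omega> \<subseteq> affine_chart f"
  using pcd closed_hyperplane[of f 1]
  by (intro closure_minimal) (auto simp: properly_convex_domain_def affine_chart_def)

lemma inner_eq_1_on_closure: "v \<in> closure \<Omega> \<Longrightarrow> f \<bullet> v = 1"
  using closure_domain_subset_chart by (auto simp: affine_chart_def)

lemma inner_eq_1_on_domain: "v \<in> \<Omega> \<Longrightarrow> f \<bullet> v = 1"
  using inner_eq_1_on_closure closure_subset by blast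

lemma compact_closure_domain: "compact (closure \<Omega>)"
  using pcd by (simp add: properly_convex_domain_def compact_eq_bounded_closed bounded_closure)

lemma rel_interior_domain: "rel_interior \<Omega> = \<Omega>"
proof -
  have "affine hull \<Omega> \<subseteq> affine_chart f"
    using pcd by (intro hull_minimal)
      (auto simp: properly_convex_domain_def affine_chart_def affine_hyperplane)
  then have "openin (top_of_set (affine hull \<Omega>)) \<Omega>"
    using pcd by (intro openin_subset_trans[OF _ hull_subset]) (auto simp: properly_convex_domain_def)
  then show ?thesis by (metis rel_open rel_open_def)
qed

lemma open_segment_subset_domain: "c \<in> \<Omega> \<Longrightarrow> p \<in> closure \<Omega> \<Longrightarrow> open_segment c p \<subseteq> \<Omega>"
  using rel_interior_closure_convex_segment[OF domain_convex] rel_interior_domain by metis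

lemma convex_combination_in_domain:
  assumes "c \<in> \<Omega>" "p \<in> closure \<Omega>" "0 < t" "t \<le> 1"
  shows "(1 - t) *\<^sub>R p + t *\<^sub>R c \<in> \<Omega>"
proof (cases "t = 1 \<or> p = c")
  case True
  then show ?thesis using assms by (auto simp flip: scaleR_add_left)
next
  case False
  then have "(1 - t) *\<^sub>R p + t *\<^sub>R c \<in> open_segment c p"
    using assms unfolding in_segment by (intro conjI exI[of _ "1 - t"]) auto
  then show ?thesis using open_segment_subset_domain assms by blast
qed

lemma open_segment_subset_domain_or_boundary:
  assumes "x \<in> closure \<Omega>" "y \<in> closure \<Omega>"
  shows "open_segment x y \<subseteq> \<Omega> \<or> open_segment x y \<subseteq> pboundary \<Omega>"
proof (cases "open_segment x y \<inter> \<Omega> = {}")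
  case True
  moreover have "open_segment x y \<subseteq> closure \<Omega>"
    using assms convex_closure[OF domain_convex] segment_open_subset_closed closed_segment_subset
    by blast
  ultimately show ?thesis by (auto simp: pboundary_def)
next
  case False
  then obtain u where "u \<in> open_segment x y" "u \<in> \<Omega>" by blast
  then have "open_segment x y = open_segment x u \<union> {u} \<union> open_segment u y"
    by (metis Un_open_segment)
  then show ?thesis
    using open_segment_subset_domain[of u x] open_segment_subset_domain[of u y] assms \<open>u \<in> \<Omega>\<close>
    by (auto simp: open_segment_commute[of x u])
qed

lemma perturbation_in_domain:
  assumes "u \<in> \<Omega>" "f \<bullet> v = 0"
  obtains d where "0 < d" "u + d *\<^sub>R v \<in> \<Omega>" "u - d *\<^sub>R v \<in> \<Omega>"
proof -
  obtain e where e: "0 < e" "ball u e \<inter> affine_chart f \<subseteq> \<Omega>"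
    using pcd assms(1) unfolding properly_convex_domain_def openin_contains_ball by blast
  define d where "d = e / (norm v + 1)"
  have d: "0 < d" and "norm (d *\<^sub>R v) < e"
    using e(1) by (auto simp: d_def field_simps add_pos_nonneg)
  then have "u + d *\<^sub>R v \<in> ball u e" "u - d *\<^sub>R v \<in> ball u e"
    by (auto simp: dist_norm)
  moreover have "u + d *\<^sub>R v \<in> affine_chart f" "u - d *\<^sub>R v \<in> affine_chart f"
    using assms inner_eq_1_on_domain by (auto simp: affine_chart_def inner_add_right inner_diff_right)
  ultimately show thesis using that d e(2) by blast
qed

lemma norm_le_inner_of_proj_act_in_closure:
  obtains B where "\<And>M z. proj_act f M z \<in> closure \<Omega> \<Longrightarrow> norm (M *v z) \<le> B * \<bar>f \<bullet> (M *v z)\<bar>"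
proof -
  obtain B where B: "\<forall>x\<in>closure \<Omega>. norm x \<le> B"
    using compact_closure_domain compact_imp_bounded bounded_iff by metis
  have "norm (M *v z) \<le> B * \<bar>f \<bullet> (M *v z)\<bar>" if P: "proj_act f M z \<in> closure \<Omega>" for M z
  proof -
    have "f \<bullet> (M *v z) \<noteq> 0"
      using inner_eq_1_on_closure[OF P] by (auto simp: proj_act_def)
    then have "norm (M *v z) = \<bar>f \<bullet> (M *v z)\<bar> * norm (proj_act f M z)"
      by (subst matrix_vector_mult_eq_scaleR_proj_act) auto
    also have "\<dots> \<le> \<bar>f \<bullet> (M *v z)\<bar> * B"
      using B P by (intro mult_left_mono) auto
    finally show ?thesis by (simp add: mult.commute)
  qed
  then show thesis by (rule that)
qed

lemma aut_maps_domain: "g \<in> Aut f \<Omega> \<Longrightarrow> v \<in> \<Omega> \<Longrightarrow> proj_act f g v \<in> \<Omega>"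
  by (auto simp: Aut_def)

lemma aut_inner_nonzero: "g \<in> Aut f \<Omega> \<Longrightarrow> v \<in> \<Omega> \<Longrightarrow> f \<bullet> (g *v v) \<noteq> 0"
  by (auto simp: Aut_def)

lemma aut_pullback_seq:
  assumes "\<And>n. g n \<in> Aut f \<Omega>" "\<And>n. p n \<in> \<Omega>"
  obtains u where "\<And>n. u n \<in> \<Omega>" "\<And>n. proj_act f (g n) (u n) = p n"
proof -
  have "\<forall>n. \<exists>u\<in>\<Omega>. proj_act f (g n) u = p n"
    using assms by (auto simp: Aut_def image_iff) (metis imageE)
  then show thesis using that by metis
qed

lemma aut_matrix_injective:
  assumes "g \<in> Aut f \<Omega>" "g *v u = g *v v"
  shows "u = v"
proof -
  have "det g \<noteq> 0" using assms(1) by (auto simp: Aut_def)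
  then obtain B where "B ** g = mat 1"
    by (auto simp: invertible_det_nz[symmetric] invertible_def)
  then show ?thesis
    by (metis assms(2) matrix_vector_mul_assoc matrix_vector_mul_lid)
qed

text \<open>The lift factor \<open>f \<bullet> (g *v v)\<close> never vanishes on the convex set \<open>\<Omega>\<close>, so it has constant sign.\<close>
lemma aut_inner_same_sign:
  assumes g: "g \<in> Aut f \<Omega>" and u: "u \<in> \<Omega>" and v: "v \<in> \<Omega>"
  shows "0 < (f \<bullet> (g *v u)) * (f \<bullet> (g *v v))"
proof (rule ccontr)
  define a b where "a = f \<bullet> (g *v u)" and "b = f \<bullet> (g *v v)"
  assume "\<not> ?thesis"
  moreover have "a \<noteq> 0" "b \<noteq> 0" using aut_inner_nonzero[OF g] u v by (auto simp: a_def b_def)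
  ultimately have ab: "a * b < 0" by (simp add: a_def b_def not_less order_le_less)
  define t where "t = a / (a - b)"
  have t01: "0 \<le> t" "t \<le> 1"
    using ab by (auto simp: t_def divide_simps mult_less_0_iff)
  have "(1 - t) *\<^sub>R u + t *\<^sub>R v \<in> \<Omega>"
    using convexD[OF domain_convex u v, of "1 - t" t] t01 by auto
  moreover have "f \<bullet> (g *v ((1 - t) *\<^sub>R u + t *\<^sub>R v)) = (1 - t) * a + t * b"
    by (simp add: a_def b_def matrix_vector_right_distrib matrix_vector_mult_scaleR inner_add_right)
  moreover have "(1 - t) * a + t * b = 0"
    using ab unfolding t_def by (cases "a = b") (auto simp: field_simps)
  ultimately show False using aut_inner_nonzero[OF g] by metis
qed

lemma aut_pullback_convex_combination:
  assumes g: "g \<in> Aut f \<Omega>" and uvw: "u \<in> \<Omega>" "v \<in> \<Omega>" "w \<in> \<Omega>"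
    and comb: "proj_act f g w = (1 - s) *\<^sub>R proj_act f g u + s *\<^sub>R proj_act f g v"
  defines "a \<equiv> (f \<bullet> (g *v w)) * (1 - s) / (f \<bullet> (g *v u))"
    and "b \<equiv> (f \<bullet> (g *v w)) * s / (f \<bullet> (g *v v))"
  shows "w = a *\<^sub>R u + b *\<^sub>R v" and "a + b = 1"
proof -
  define lu lv lw where "lu = f \<bullet> (g *v u)" and "lv = f \<bullet> (g *v v)" and "lw = f \<bullet> (g *v w)"
  have nz: "lu \<noteq> 0" "lv \<noteq> 0"
    using aut_inner_nonzero[OF g] uvw by (auto simp: lu_def lv_def)
  have lift: "g *v u = lu *\<^sub>R proj_act f g u" "g *v v = lv *\<^sub>R proj_act f g v"
    "g *v w = lw *\<^sub>R proj_act f g w"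
    using aut_inner_nonzero[OF g] uvw matrix_vector_mult_eq_scaleR_proj_act
    by (auto simp: lu_def lv_def lw_def)
  have "g *v (a *\<^sub>R u + b *\<^sub>R v) = (a * lu) *\<^sub>R proj_act f g u + (b * lv) *\<^sub>R proj_act f g v"
    by (simp add: matrix_vector_right_distrib matrix_vector_mult_scaleR lift)
  also have "\<dots> = lw *\<^sub>R ((1 - s) *\<^sub>R proj_act f g u + s *\<^sub>R proj_act f g v)"
  proof -
    have "a * lu = lw * (1 - s)" "b * lv = lw * s"
      using nz by (simp_all add: a_def b_def lu_def lv_def lw_def)
    then show ?thesis by (simp add: scaleR_add_right)
  qed
  also have "\<dots> = g *v w"
    by (simp add: comb lift)
  finally show w: "w = a *\<^sub>R u + b *\<^sub>R v"
    using aut_matrix_injective[OF g] by metis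
  show "a + b = 1"
    using arg_cong[OF w, of "inner f"] inner_eq_1_on_domain uvw by (simp add: inner_add_right)
qed

lemma aut_pullback_parameter_lower_bound:
  assumes g: "g \<in> Aut f \<Omega>" and pts: "e \<in> \<Omega>" "e' \<in> \<Omega>" "k \<in> \<Omega>" "z \<in> \<Omega>"
    and k_comb: "proj_act f g k = (1 - r) *\<^sub>R proj_act f g e + r *\<^sub>R proj_act f g e'"
    and z_comb: "proj_act f g z = (1 - s) *\<^sub>R proj_act f g e + s *\<^sub>R proj_act f g k"
    and r: "0 < r" "r < 1" and s: "0 < s" "s < 1"
  obtains l where "s * (1 - r) / (s * (1 - r) + (1 - s)) \<le> l" "l \<le> 1"
    "z = (1 - l) *\<^sub>R e + l *\<^sub>R k"
proof -
  define \<alpha> \<beta> \<gamma> \<mu> where "\<alpha> = f \<bullet> (g *v e)" and "\<beta> = f \<bullet> (g *v k)"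
    and "\<gamma> = f \<bullet> (g *v e')" and "\<mu> = f \<bullet> (g *v z)"
  have pos: "0 < \<alpha> * \<beta>" "0 < \<beta> * \<gamma>" "0 < \<mu> * \<alpha>" "0 < \<mu> * \<beta>"
    using aut_inner_same_sign[OF g] pts by (auto simp: \<alpha>_def \<beta>_def \<gamma>_def \<mu>_def)
  define a l where "a = \<mu> * (1 - s) / \<alpha>" and "l = \<mu> * s / \<beta>"
  have zal: "z = a *\<^sub>R e + l *\<^sub>R k" "a + l = 1"
    using aut_pullback_convex_combination[OF g pts(1,3,4) z_comb]
    by (simp_all add: a_def l_def \<alpha>_def \<beta>_def \<mu>_def)
  define b where "b = \<beta> * (1 - r) / \<alpha>"
  have "b + \<beta> * r / \<gamma> = 1"
    using aut_pullback_convex_combination[OF g pts(1,2,3) k_comb]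
    by (simp add: b_def \<alpha>_def \<beta>_def \<gamma>_def)
  moreover have "0 < \<beta> * r / \<gamma>"
    using pos(2) r by (auto simp: zero_less_divide_iff zero_less_mult_iff mult_less_0_iff)
  ultimately have "b \<le> 1" by linarith
  have "0 < a" "0 < l"
    using pos s by (auto simp: a_def l_def zero_less_divide_iff zero_less_mult_iff mult_less_0_iff)
  have "\<alpha> \<noteq> 0" "\<beta> \<noteq> 0" using pos(1) by auto
  txt \<open>The pulled-back parameter is controlled by the same ratio \<open>\<beta> / \<alpha>\<close> as \<open>b\<close>.\<close>
  have "s * (1 - r) * a = (1 - s) * l * b"
    using \<open>\<alpha> \<noteq> 0\<close> \<open>\<beta> \<noteq> 0\<close> by (simp add: a_def l_def b_def field_simps)
  also have "\<dots> \<le> (1 - s) * l"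
    using \<open>b \<le> 1\<close> \<open>0 < l\<close> s by (simp add: mult_left_le)
  finally have "s * (1 - r) * (1 - l) \<le> (1 - s) * l"
    using zal(2) by (metis add_diff_cancel_right')
  moreover have "0 < s * (1 - r) + (1 - s)" using r s by (simp add: add_pos_pos)
  ultimately have "s * (1 - r) / (s * (1 - r) + (1 - s)) \<le> l"
    by (simp add: pos_divide_le_eq algebra_simps)
  moreover have "l \<le> 1" using zal(2) \<open>0 < a\<close> by simp
  ultimately show thesis
    using that zal by (simp add: eq_diff_eq[symmetric])
qed

lemma aut_limit_inner_same_sign:
  assumes G: "\<And>n. G n \<in> Aut f \<Omega>" and c: "\<And>n. c n \<noteq> 0"
    and lim: "(\<lambda>n. c n *\<^sub>R G n) \<longlonglongrightarrow> A" and u: "u \<in> \<Omega>" and v: "v \<in> \<Omega>"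
  shows "0 \<le> (f \<bullet> (A *v u)) * (f \<bullet> (A *v v))"
proof (rule tendsto_le[OF trivial_limit_sequentially])
  show "(\<lambda>n. (f \<bullet> ((c n *\<^sub>R G n) *v u)) * (f \<bullet> ((c n *\<^sub>R G n) *v v)))
      \<longlonglongrightarrow> (f \<bullet> (A *v u)) * (f \<bullet> (A *v v))"
    by (intro tendsto_intros tendsto_matrix_vector_mult lim)
  have "0 < (c n * c n) * ((f \<bullet> (G n *v u)) * (f \<bullet> (G n *v v)))" for n
    using mult_pos_pos[of "c n * c n", OF _ aut_inner_same_sign[OF G[of n] u v]] c[of n]
    by (metis not_real_square_gt_zero)
  then show "\<forall>\<^sub>F n in sequentially. 0 \<le> (f \<bullet> ((c n *\<^sub>R G n) *v u)) * (f \<bullet> ((c n *\<^sub>R G n) *v v))"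
    by (intro always_eventually allI less_imp_le)
      (simp add: scaleR_matrix_vector_assoc[symmetric] algebra_simps)
qed (rule tendsto_const)

lemma aut_limit_norm_le_inner:
  assumes B: "\<And>M z. proj_act f M z \<in> closure \<Omega> \<Longrightarrow> norm (M *v z) \<le> B * \<bar>f \<bullet> (M *v z)\<bar>"
    and G: "\<And>n. G n \<in> Aut f \<Omega>" and c: "\<And>n. c n \<noteq> 0"
    and lim: "(\<lambda>n. c n *\<^sub>R G n) \<longlonglongrightarrow> A" and z: "z \<in> \<Omega>"
  shows "norm (A *v z) \<le> B * \<bar>f \<bullet> (A *v z)\<bar>"
proof (rule tendsto_le[OF trivial_limit_sequentially])
  show "(\<lambda>n. B * \<bar>f \<bullet> ((c n *\<^sub>R G n) *v z)\<bar>) \<longlonglongrightarrow> B * \<bar>f \<bullet> (A *v z)\<bar>"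
    and "(\<lambda>n. norm ((c n *\<^sub>R G n) *v z)) \<longlonglongrightarrow> norm (A *v z)"
    by (intro tendsto_intros tendsto_matrix_vector_mult lim)+
  have "proj_act f (c n *\<^sub>R G n) z \<in> closure \<Omega>" for n
    using aut_maps_domain[OF G[of n] z] closure_subset by (auto simp: proj_act_scaleR[OF c])
  then show "\<forall>\<^sub>F n in sequentially. norm ((c n *\<^sub>R G n) *v z) \<le> B * \<bar>f \<bullet> ((c n *\<^sub>R G n) *v z)\<bar>"
    by (intro always_eventually allI B)
qed

text \<open>If \<open>f \<bullet> (A *v u) = 0\<close>, then \<open>A *v u = 0\<close> by the norm bound; as \<open>f \<bullet> (A *v _)\<close> has constant
  sign on \<open>\<Omega>\<close> and is odd about \<open>u\<close> in the directions of \<open>ker f\<close>, \<open>A\<close> also kills \<open>ker f\<close>, so \<open>A = 0\<close>.\<close>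
lemma aut_limit_inner_nonzero:
  assumes G: "\<And>n. G n \<in> Aut f \<Omega>" and c: "\<And>n. c n \<noteq> 0"
    and lim: "(\<lambda>n. c n *\<^sub>R G n) \<longlonglongrightarrow> A" and A: "A \<noteq> 0" and u: "u \<in> \<Omega>"
  shows "f \<bullet> (A *v u) \<noteq> 0"
proof
  assume Au: "f \<bullet> (A *v u) = 0"
  obtain B where "\<And>M z. proj_act f M z \<in> closure \<Omega> \<Longrightarrow> norm (M *v z) \<le> B * \<bar>f \<bullet> (M *v z)\<bar>"
    using norm_le_inner_of_proj_act_in_closure by blast
  from aut_limit_norm_le_inner[OF this G c lim]
  have kernel: "A *v z = 0" if "z \<in> \<Omega>" "f \<bullet> (A *v z) = 0" for z
    using that by fastforce
  obtain v where v: "f \<bullet> v = 0" "A *v v \<noteq> 0"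
    using nonzero_matrix_nonvanishing_on_hyperplane[OF A kernel[OF u Au] inner_eq_1_on_domain[OF u]] .
  obtain d where d: "0 < d" "u + d *\<^sub>R v \<in> \<Omega>" "u - d *\<^sub>R v \<in> \<Omega>"
    using perturbation_in_domain[OF u v(1)] .
  define t where "t = d * (f \<bullet> (A *v v))"
  have "f \<bullet> (A *v (u + d *\<^sub>R v)) = t" and "f \<bullet> (A *v (u - d *\<^sub>R v)) = - t"
    using Au by (simp_all add: t_def algebra_simps)
  with aut_limit_inner_same_sign[OF G c lim d(2,3)] have "t * t \<le> 0" by simp
  then have "f \<bullet> (A *v (u + d *\<^sub>R v)) = 0"
    using \<open>f \<bullet> (A *v (u + d *\<^sub>R v)) = t\<close> by (auto simp: mult_le_0_iff)
  then have "A *v (u + d *\<^sub>R v) = 0" by (rule kernel[OF d(2)])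
  then have "d *\<^sub>R (A *v v) = 0"
    using kernel[OF u Au] by (simp add: algebra_simps)
  then show False using d(1) v(2) by simp
qed

lemma orbital_limit_setI:
  assumes HA: "H \<subseteq> Aut f \<Omega>" and g: "\<And>n. g n \<in> H"
    and z: "\<And>n. z n \<in> \<Omega>" "z \<longlonglongrightarrow> z0" "z0 \<in> \<Omega>"
    and lim: "(\<lambda>n. proj_act f (g n) (z n)) \<longlonglongrightarrow> p" and p: "p \<in> pboundary \<Omega>"
  shows "p \<in> orbital_limit_set f \<Omega> H"
proof -
  have gA: "g n \<in> Aut f \<Omega>" for n using g HA by blast
  define c where "c n = inverse (norm (g n))" for n
  have c: "c n \<noteq> 0" for n
    using aut_inner_nonzero[OF gA[of n] z(3)] by (auto simp: c_def)
  have "\<forall>n. c n *\<^sub>R g n \<in> sphere 0 1" using c by (simp add: c_def)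
  then obtain A r where "A \<in> sphere 0 1" and r: "strict_mono r"
    and "((\<lambda>n. c n *\<^sub>R g n) \<circ> r) \<longlonglongrightarrow> A"
    by (rule seq_compactE[OF compact_imp_seq_compact[OF compact_sphere]])
  then have "A \<noteq> 0" and limA: "(\<lambda>n. c (r n) *\<^sub>R g (r n)) \<longlonglongrightarrow> A"
    by (auto simp: o_def)
  have fA: "f \<bullet> (A *v z0) \<noteq> 0"
    using aut_limit_inner_nonzero[OF gA c limA \<open>A \<noteq> 0\<close> z(3)] .
  have "(\<lambda>n. proj_act f (g (r n)) (z (r n))) \<longlonglongrightarrow> proj_act f A z0"
    using tendsto_proj_act[OF limA LIMSEQ_subseq_LIMSEQ[OF z(2) r] fA]
    by (simp add: proj_act_scaleR[OF c] o_def)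
  moreover have "(\<lambda>n. proj_act f (g (r n)) (z (r n))) \<longlonglongrightarrow> p"
    using LIMSEQ_subseq_LIMSEQ[OF lim r] by (simp add: o_def)
  ultimately have "p = proj_act f A z0" by (rule LIMSEQ_unique[rotated])
  moreover have "(\<lambda>n. proj_act f (g (r n)) z0) \<longlonglongrightarrow> proj_act f A z0"
    using tendsto_proj_act[OF limA tendsto_const fA] by (simp add: proj_act_scaleR[OF c])
  moreover have "proj_act f (g (r n)) z0 \<in> orbit f H z0 - {p}" for n
    using g aut_maps_domain[OF gA z(3)] p by (auto simp: orbit_def pboundary_def)
  ultimately have "p islimpt orbit f H z0"
    unfolding islimpt_sequential by (intro exI[of _ "\<lambda>n. proj_act f (g (r n)) z0"]) simp
  then show ?thesis using p z(3) by (auto simp: orbital_limit_set_def)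
qed

lemma limit_set_subset_closure_Cor:
  assumes "convex_cocompact f \<Omega> H"
  shows "orbital_limit_set f \<Omega> H \<subseteq> closure (Cor f \<Omega> H)"
proof
  fix p assume p: "p \<in> orbital_limit_set f \<Omega> H"
  obtain c where c: "c \<in> Cor f \<Omega> H" using assms by (auto simp: convex_cocompact_def)
  have "p \<in> closure \<Omega>" "p \<notin> \<Omega>" "c \<in> \<Omega>"
    using p c by (auto simp: orbital_limit_set_def pboundary_def Cor_def)
  then have "p \<noteq> c" "open_segment c p \<subseteq> \<Omega>"
    using open_segment_subset_domain by auto
  moreover have "open_segment c p \<subseteq> convex hull (orbital_limit_set f \<Omega> H)"
    using c p by (intro subset_trans[OF segment_open_subset_closed] closed_segment_subset)
      (auto simp: Cor_def hull_inc)
  ultimately have "closed_segment c p \<subseteq> closure (Cor f \<Omega> H)"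
    by (metis Cor_def closure_mono closure_open_segment le_inf_iff)
  then show "p \<in> closure (Cor f \<Omega> H)" by auto
qed

lemma closure_Cor_boundary_in_limit_set:
  assumes HA: "H \<subseteq> Aut f \<Omega>" and cc: "convex_cocompact f \<Omega> H"
    and p: "p \<in> closure (Cor f \<Omega> H)" "p \<notin> \<Omega>"
  shows "p \<in> orbital_limit_set f \<Omega> H"
proof -
  obtain K where K: "compact K" "K \<subseteq> Cor f \<Omega> H" "Cor f \<Omega> H \<subseteq> (\<Union>g\<in>H. proj_act f g ` K)"
    using cc by (auto simp: convex_cocompact_def)
  have KO: "K \<subseteq> \<Omega>" using K(2) by (auto simp: Cor_def)
  obtain c where c: "\<And>n. c n \<in> Cor f \<Omega> H" and cl: "c \<longlonglongrightarrow> p"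
    using p(1) unfolding closure_sequential by blast
  have "\<forall>n. \<exists>g\<in>H. \<exists>k\<in>K. c n = proj_act f g k"
    using c K(3) by blast
  then obtain g k where g: "\<And>n. g n \<in> H" and k: "\<And>n. k n \<in> K"
    and gk: "\<And>n. c n = proj_act f (g n) (k n)"
    by metis
  obtain k0 r where k0: "k0 \<in> K" and r: "strict_mono r" and kl: "(k \<circ> r) \<longlonglongrightarrow> k0"
    using seq_compactE[OF compact_imp_seq_compact[OF K(1)]] k by metis
  have "(\<lambda>n. proj_act f (g (r n)) (k (r n))) \<longlonglongrightarrow> p"
    using LIMSEQ_subseq_LIMSEQ[OF cl r] by (simp add: gk o_def)
  moreover have "p \<in> pboundary \<Omega>"
    using p closure_mono[of "Cor f \<Omega> H" \<Omega>] by (auto simp: pboundary_def Cor_def)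
  ultimately show ?thesis
    by (intro orbital_limit_setI[OF HA, of "g \<circ> r" "k \<circ> r" k0]) (use g k KO k0 kl in auto)
qed

lemma convex_combination_subseq_tendsto_domain:
  fixes k e :: "nat \<Rightarrow> real^'n" and l :: "nat \<Rightarrow> real"
  assumes K: "compact K" "K \<subseteq> \<Omega>" and k: "\<And>n. k n \<in> K" and e: "\<And>n. e n \<in> closure \<Omega>"
    and l: "0 < t0" "\<And>n. t0 \<le> l n" "\<And>n. l n \<le> 1"
  obtains \<rho> z0 where "strict_mono \<rho>" "z0 \<in> \<Omega>"
    "(\<lambda>n. (1 - l (\<rho> n)) *\<^sub>R e (\<rho> n) + l (\<rho> n) *\<^sub>R k (\<rho> n)) \<longlonglongrightarrow> z0"
proof -
  have "compact (K \<times> closure \<Omega> \<times> {t0..1})"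
    by (intro compact_Times K(1) compact_closure_domain compact_Icc)
  moreover have "\<forall>n. (k n, e n, l n) \<in> K \<times> closure \<Omega> \<times> {t0..1}"
    using k e l by auto
  ultimately obtain L \<rho> where L: "L \<in> K \<times> closure \<Omega> \<times> {t0..1}"
    and \<rho>: "strict_mono \<rho>" and lim: "((\<lambda>n. (k n, e n, l n)) \<circ> \<rho>) \<longlonglongrightarrow> L"
    by (rule seq_compactE[OF compact_imp_seq_compact])
  obtain k0 e0 l0 where L_eq: "L = (k0, e0, l0)" by (cases L)
  have "(\<lambda>n. k (\<rho> n)) \<longlonglongrightarrow> k0" "(\<lambda>n. e (\<rho> n)) \<longlonglongrightarrow> e0" "(\<lambda>n. l (\<rho> n)) \<longlonglongrightarrow> l0"
    using tendsto_fst[OF lim] tendsto_fst[OF tendsto_snd[OF lim]] tendsto_snd[OF tendsto_snd[OF lim]]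
    by (simp_all add: L_eq o_def)
  then have "(\<lambda>n. (1 - l (\<rho> n)) *\<^sub>R e (\<rho> n) + l (\<rho> n) *\<^sub>R k (\<rho> n))
      \<longlonglongrightarrow> (1 - l0) *\<^sub>R e0 + l0 *\<^sub>R k0"
    by (intro tendsto_intros)
  moreover have "(1 - l0) *\<^sub>R e0 + l0 *\<^sub>R k0 \<in> \<Omega>"
    using L K(2) l(1) by (intro convex_combination_in_domain) (auto simp: L_eq)
  ultimately show thesis using that \<rho> by blast
qed

lemma boundary_segment_point_in_limit_set:
  assumes HA: "H \<subseteq> Aut f \<Omega>" and cc: "convex_cocompact f \<Omega> H"
    and w: "w \<in> orbital_limit_set f \<Omega> H" and x: "x \<in> closure \<Omega>" and y: "y \<in> closure \<Omega>"
    and r: "0 < r" "r < 1" and wxy: "w = (1 - r) *\<^sub>R x + r *\<^sub>R y"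
    and s: "0 < s" "s < 1" and q: "q = (1 - s) *\<^sub>R x + s *\<^sub>R w" "q \<notin> \<Omega>"
  shows "q \<in> orbital_limit_set f \<Omega> H"
proof -
  obtain K where K: "compact K" "K \<subseteq> Cor f \<Omega> H" "Cor f \<Omega> H \<subseteq> (\<Union>g\<in>H. proj_act f g ` K)"
    and "Cor f \<Omega> H \<noteq> {}"
    using cc by (auto simp: convex_cocompact_def)
  then obtain c0 where c0: "c0 \<in> Cor f \<Omega> H" by blast
  have KO: "K \<subseteq> \<Omega>" and c0O: "c0 \<in> \<Omega>" using K(2) c0 by (auto simp: Cor_def)
  define t :: "nat \<Rightarrow> real" where "t n = inverse (real (Suc n))" for n
  have t: "0 < t n" "t n \<le> 1" for n by (simp_all add: t_def inverse_le_1_iff)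
  define near where "near p n = (1 - t n) *\<^sub>R p + t n *\<^sub>R c0" for p n
  have near: "near p n \<in> \<Omega>" if "p \<in> closure \<Omega>" for p n
    unfolding near_def by (rule convex_combination_in_domain[OF c0O that t])
  have wc: "w \<in> closure \<Omega>" using w by (auto simp: orbital_limit_set_def pboundary_def)
  have qc: "q \<in> closure \<Omega>"
    using convexD[OF convex_closure[OF domain_convex] x wc, of "1 - s" s] s q(1) by auto
  have "near w n \<in> Cor f \<Omega> H" for n
    using near[OF wc] convexD[OF convex_convex_hull hull_inc[OF w] _, of c0 "1 - t n" "t n"] c0 t[of n]
    by (auto simp: Cor_def near_def)
  then have "\<forall>n. \<exists>g\<in>H. \<exists>k\<in>K. near w n = proj_act f g k"
    using K(3) by blast
  then obtain g k where g: "\<And>n. g n \<in> H" and k: "\<And>n. k n \<in> K"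
    and gk: "\<And>n. near w n = proj_act f (g n) (k n)"
    by metis
  have gA: "g n \<in> Aut f \<Omega>" for n using g HA by blast
  obtain e where e: "\<And>n. e n \<in> \<Omega>" "\<And>n. proj_act f (g n) (e n) = near x n"
    using aut_pullback_seq[of g "near x", OF gA near[OF x]] by blast
  obtain e' where e': "\<And>n. e' n \<in> \<Omega>" "\<And>n. proj_act f (g n) (e' n) = near y n"
    using aut_pullback_seq[of g "near y", OF gA near[OF y]] by blast
  obtain z where z: "\<And>n. z n \<in> \<Omega>" "\<And>n. proj_act f (g n) (z n) = near q n"
    using aut_pullback_seq[of g "near q", OF gA near[OF qc]] by blast
  define t0 where "t0 = s * (1 - r) / (s * (1 - r) + (1 - s))"
  have "\<exists>l. t0 \<le> l \<and> l \<le> 1 \<and> z n = (1 - l) *\<^sub>R e n + l *\<^sub>R k n" for n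
  proof -
    have "proj_act f (g n) (k n) = (1 - r) *\<^sub>R proj_act f (g n) (e n) + r *\<^sub>R proj_act f (g n) (e' n)"
      and "proj_act f (g n) (z n) = (1 - s) *\<^sub>R proj_act f (g n) (e n) + s *\<^sub>R proj_act f (g n) (k n)"
      by (simp_all add: gk[symmetric] e(2) e'(2) z(2) near_def wxy q(1) algebra_simps)
    from aut_pullback_parameter_lower_bound[OF gA e(1) e'(1) subsetD[OF KO k] z(1) this r s]
    show ?thesis unfolding t0_def by blast
  qed
  then obtain l where l: "\<And>n. t0 \<le> l n" "\<And>n. l n \<le> 1"
    and zl: "\<And>n. z n = (1 - l n) *\<^sub>R e n + l n *\<^sub>R k n"
    by metis
  have t0: "0 < t0" using r s by (simp add: t0_def add_pos_pos)
  have e_cl: "e n \<in> closure \<Omega>" for n using e(1) closure_subset by blast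
  obtain \<rho> z0 where \<rho>: "strict_mono \<rho>" and z0: "z0 \<in> \<Omega>"
    and "(\<lambda>n. (1 - l (\<rho> n)) *\<^sub>R e (\<rho> n) + l (\<rho> n) *\<^sub>R k (\<rho> n)) \<longlonglongrightarrow> z0"
    using convex_combination_subseq_tendsto_domain[where k = k and e = e and l = l,
        OF K(1) KO k e_cl t0 l] by blast
  then have "(\<lambda>n. z (\<rho> n)) \<longlonglongrightarrow> z0" by (simp add: zl)
  moreover have "(\<lambda>n. proj_act f (g (\<rho> n)) (z (\<rho> n))) \<longlonglongrightarrow> q"
  proof -
    have "near q \<longlonglongrightarrow> (1 - 0) *\<^sub>R q + 0 *\<^sub>R c0"
      unfolding near_def t_def by (intro tendsto_intros LIMSEQ_inverse_real_of_nat)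
    then show ?thesis using LIMSEQ_subseq_LIMSEQ[OF _ \<rho>] by (simp add: z(2) o_def)
  qed
  moreover have "q \<in> pboundary \<Omega>" using qc q(2) by (simp add: pboundary_def)
  ultimately show ?thesis
    by (intro orbital_limit_setI[OF HA, of "g \<circ> \<rho>" "z \<circ> \<rho>" z0]) (use g z(1) z0 in \<open>auto simp: o_def\<close>)
qed

lemma boundary_segment_endpoint_in_limit_set:
  assumes HA: "H \<subseteq> Aut f \<Omega>" and cc: "convex_cocompact f \<Omega> H"
    and w: "w \<in> orbital_limit_set f \<Omega> H" "w \<in> open_segment x y"
    and x: "x \<in> closure \<Omega>" "x \<notin> \<Omega>" and y: "y \<in> closure \<Omega>"
    and seg: "open_segment x y \<subseteq> pboundary \<Omega>"
  shows "x \<in> orbital_limit_set f \<Omega> H"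
proof -
  obtain r where r: "0 < r" "r < 1" and wxy: "w = (1 - r) *\<^sub>R x + r *\<^sub>R y"
    using w(2) unfolding in_segment by blast
  have "open_segment x w \<subseteq> orbital_limit_set f \<Omega> H"
  proof
    fix q assume q: "q \<in> open_segment x w"
    then obtain s where s: "0 < s" "s < 1" and qxw: "q = (1 - s) *\<^sub>R x + s *\<^sub>R w"
      unfolding in_segment by blast
    have "open_segment x w \<subseteq> open_segment x y"
      using w(2) by (simp add: subset_open_segment open_closed_segment)
    then have "q \<notin> \<Omega>" using q seg by (auto simp: pboundary_def)
    then show "q \<in> orbital_limit_set f \<Omega> H"
      using boundary_segment_point_in_limit_set[OF HA cc w(1) x(1) y r wxy s qxw] by blast
  qed
  then have "closure (open_segment x w) \<subseteq> closure (Cor f \<Omega> H)"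
    using limit_set_subset_closure_Cor[OF cc] by (metis closure_closure closure_mono order_trans)
  moreover have "x \<noteq> w" using w(2) by (auto simp: open_segment_def)
  ultimately have "x \<in> closure (Cor f \<Omega> H)" by auto
  then show ?thesis using closure_Cor_boundary_in_limit_set[OF HA cc _ x(2)] by blast
qed

end

theorem mainTheorem2:
  fixes f :: "real^'n" and \<Omega> \<Lambda> :: "(real^'n) set" and \<H> :: "(real^'n^'n) set set"
  assumes "properly_convex_domain f \<Omega>"
    and "\<Lambda> \<subseteq> pboundary \<Omega>"
    and "boundary_convex \<Omega> \<Lambda>"
    and "contains_faces \<Omega> \<Lambda>"
    and "\<forall>H\<in>\<H>. aut_subgroup f \<Omega> H \<and> convex_cocompact f \<Omega> H"
    and "\<forall>H1\<in>\<H>. \<forall>H2\<in>\<H>. H1 \<noteq> H2 \<longrightarrow>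
           orbital_limit_set f \<Omega> H1 \<inter> orbital_limit_set f \<Omega> H2 = {}"
    and "\<forall>p \<in> \<Lambda> - (\<Union>H\<in>\<H>. orbital_limit_set f \<Omega> H). extreme_bdry \<Omega> p"
    and "x \<in> \<Lambda>" and "y \<in> \<Lambda>" and "x \<noteq> y"
    and "\<not> (\<exists>H\<in>\<H>. x \<in> orbital_limit_set f \<Omega> H \<and> y \<in> orbital_limit_set f \<Omega> H)"
  shows "open_segment x y \<subseteq> \<Omega>"
proof (rule ccontr)
  note pcd = assms(1)
  have x: "x \<in> closure \<Omega>" "x \<notin> \<Omega>" and y: "y \<in> closure \<Omega>" "y \<notin> \<Omega>"
    using assms(2,8,9) by (auto simp: pboundary_def)
  assume "\<not> open_segment x y \<subseteq> \<Omega>"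
  then have seg: "open_segment x y \<subseteq> pboundary \<Omega>"
    using open_segment_subset_domain_or_boundary[OF pcd x(1) y(1)] by blast
  define w where "w = midpoint x y"
  have w: "w \<in> open_segment x y" using assms(10) by (simp add: w_def)
  have "w \<in> \<Lambda>" using assms(3,8,9) seg w by (auto simp: boundary_convex_def)
  moreover have "\<not> extreme_bdry \<Omega> w" using seg w assms(10) by (auto simp: extreme_bdry_def)
  ultimately obtain H where H: "H \<in> \<H>" and wH: "w \<in> orbital_limit_set f \<Omega> H"
    using assms(7) by blast
  have HA: "H \<subseteq> Aut f \<Omega>" and cc: "convex_cocompact f \<Omega> H"
    using assms(5) H by (auto simp: aut_subgroup_def)
  have "x \<in> orbital_limit_set f \<Omega> H"
    using boundary_segment_endpoint_in_limit_set[OF pcd HA cc wH w x y(1) seg] .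
  moreover have "y \<in> orbital_limit_set f \<Omega> H"
    using boundary_segment_endpoint_in_limit_set[OF pcd HA cc wH _ y x(1)] w seg
    by (simp add: open_segment_commute)
  ultimately show False using assms(11) H by blast
qed

end
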